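(* Let $P,N>0$. If $\mathcal{C}$ is a $(P,N,1)$-sphere packing, then it is also a $(P,N',L)$-average-radius multiple packing for any $0\le N'<\frac{2(L-1)N}{L}$ and any $L\in\mathbb{Z}_{\ge2}$.
   Context: $\mathcal{B}^n(y,r)$ is the closed Euclidean ball in $\mathbb{R}^n$ of radius $r$ centered at $y$, $\mathcal{B}^n(r)=\mathcal{B}^n(0,r)$. A set $\mathcal{C}\subseteq\mathcal{B}^n(\sqrt{nP})$ is a $(P,N,1)$-sphere packing if $|\mathcal{C}\cap\mathcal{B}^n(y,\sqrt{nN})|\le1$ for every $y\in\mathbb{R}^n$. For $x_1,\dots,x_m\in\mathbb{R}^n$ with centroid $\bar x$, $\overline{\mathrm{rad}}^2(x_1,\dots,x_m)=\frac1m\sum_i\|x_i-\bar x\|_2^2$. A set $\mathcal{C}\subseteq\mathcal{B}^n(\sqrt{nP})$ is a $(P,N',K)$-average-radius multiple packing if every $K+1$ distinct points of $\mathcal{C}$ have average squared radius strictly greater than $nN'$. *)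

theory Defs
  imports "HOL-Analysis.Analysis"
begin

text \<open>Points live in an abstract Euclidean space 'a of dimension n = DIM('a).
  Closed ball B^n(y,r) is cball y r.\<close>

definition sphere_packing :: "real \<Rightarrow> real \<Rightarrow> 'a::euclidean_space set \<Rightarrow> bool" where
  "sphere_packing P N C \<longleftrightarrow>
     C \<subseteq> cball 0 (sqrt (real DIM('a) * P)) \<and>
     (\<forall>y. \<forall>x\<in>C \<inter> cball y (sqrt (real DIM('a) * N)).
            \<forall>z\<in>C \<inter> cball y (sqrt (real DIM('a) * N)). x = z)"

definition centroid :: "'a::euclidean_space set \<Rightarrow> 'a" where
  "centroid S = (1 / real (card S)) *\<^sub>R (\<Sum>x\<in>S. x)"

definition avg_rad2 :: "'a::euclidean_space set \<Rightarrow> real" where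
  "avg_rad2 S = (1 / real (card S)) * (\<Sum>x\<in>S. (norm (x - centroid S))\<^sup>2)"

definition avg_radius_multiple_packing :: "real \<Rightarrow> real \<Rightarrow> nat \<Rightarrow> 'a::euclidean_space set \<Rightarrow> bool" where
  "avg_radius_multiple_packing P N' K C \<longleftrightarrow>
     C \<subseteq> cball 0 (sqrt (real DIM('a) * P)) \<and>
     (\<forall>S. S \<subseteq> C \<and> finite S \<and> card S = K + 1 \<longrightarrow> avg_rad2 S > real DIM('a) * N')"

end

theory Submission
  imports Defs
begin

text \<open>The average squared radius of a finite set S of m points equals the sum of all squared
  pairwise distances divided by 2m^2. In a (P,N,1)-sphere packing two distinct points are
  more than 2 sqrt(nN) apart, since otherwise the ball of radius sqrt(nN) around their midpoint
  would contain both. Hence any L+1 distinct codewords have average squared radius greater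
  than 2L/(L+1) nN, which is at least 2(L-1)/L nN > nN'.\<close>

lemma sum_sum_norm_diff_sq:
  fixes S :: "'a::real_inner set"
  assumes "finite S"
  shows "(\<Sum>x\<in>S. \<Sum>z\<in>S. (norm (x - z))\<^sup>2)
           = 2 * real (card S) * (\<Sum>x\<in>S. x \<bullet> x) - 2 * (norm (\<Sum>x\<in>S. x))\<^sup>2"
proof -
  have "(\<Sum>x\<in>S. \<Sum>z\<in>S. (norm (x - z))\<^sup>2)
          = (\<Sum>x\<in>S. \<Sum>z\<in>S. x \<bullet> x + z \<bullet> z - 2 * (x \<bullet> z))"
    by (intro sum.cong refl)
       (simp add: power2_norm_eq_inner inner_diff_left inner_diff_right inner_commute)
  also have "\<dots> = (\<Sum>x\<in>S. real (card S) * (x \<bullet> x) + (\<Sum>z\<in>S. z \<bullet> z)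
                     - 2 * (x \<bullet> (\<Sum>z\<in>S. z)))"
    by (simp add: sum_subtractf sum.distrib inner_sum_right sum_distrib_left)
  also have "\<dots> = 2 * real (card S) * (\<Sum>x\<in>S. x \<bullet> x) - 2 * (norm (\<Sum>x\<in>S. x))\<^sup>2"
    by (simp add: sum_subtractf sum.distrib sum_distrib_left inner_sum_left
        power2_norm_eq_inner mult.assoc)
  finally show ?thesis .
qed

lemma sum_norm_diff_centroid_sq:
  fixes S :: "'a::euclidean_space set"
  assumes "finite S" and "S \<noteq> {}"
  shows "(\<Sum>x\<in>S. (norm (x - centroid S))\<^sup>2)
           = (\<Sum>x\<in>S. x \<bullet> x) - (norm (\<Sum>x\<in>S. x))\<^sup>2 / real (card S)"
proof -
  define m where "m = real (card S)"
  define s where "s = (\<Sum>x\<in>S. x)"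
  have "m > 0" using assms by (simp add: m_def card_gt_0_iff)
  have centroid: "centroid S = (1 / m) *\<^sub>R s" by (simp add: centroid_def m_def s_def)
  have "(\<Sum>x\<in>S. (norm (x - centroid S))\<^sup>2)
          = (\<Sum>x\<in>S. x \<bullet> x - (2 / m) * (x \<bullet> s) + (s \<bullet> s) / m\<^sup>2)"
    by (intro sum.cong refl)
       (simp only: centroid power2_norm_eq_inner,
        simp add: inner_diff_left inner_diff_right inner_commute power2_eq_square field_simps)
  also have "\<dots> = (\<Sum>x\<in>S. x \<bullet> x) - (2 / m) * (s \<bullet> s) + m * (s \<bullet> s) / m\<^sup>2"
    by (simp add: sum_subtractf sum.distrib sum_distrib_left[symmetric]
        sum_divide_distrib[symmetric] inner_sum_left s_def m_def)
  also have "\<dots> = (\<Sum>x\<in>S. x \<bullet> x) - (s \<bullet> s) / m"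
    using \<open>m > 0\<close> by (simp add: field_simps power2_eq_square)
  finally show ?thesis by (simp add: m_def s_def power2_norm_eq_inner)
qed

lemma avg_rad2_eq_sum_sum_norm_diff_sq:
  fixes S :: "'a::euclidean_space set"
  assumes "finite S" and "S \<noteq> {}"
  shows "avg_rad2 S = (\<Sum>x\<in>S. \<Sum>z\<in>S. (norm (x - z))\<^sup>2) / (2 * (real (card S))\<^sup>2)"
proof -
  have "card S > 0" using assms by (simp add: card_gt_0_iff)
  then show ?thesis
    unfolding avg_rad2_def sum_norm_diff_centroid_sq[OF assms] sum_sum_norm_diff_sq[OF assms(1)]
    by (simp add: field_simps power2_eq_square)
qed

lemma avg_rad2_gt_of_pairwise_sq_dist_gt:
  fixes S :: "'a::euclidean_space set"
  assumes "finite S" and "card S \<ge> 2"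
    and sep: "\<And>x z. x \<in> S \<Longrightarrow> z \<in> S \<Longrightarrow> x \<noteq> z \<Longrightarrow> d < (norm (x - z))\<^sup>2"
  shows "(real (card S) - 1) * d / (2 * real (card S)) < avg_rad2 S"
proof -
  define m where "m = real (card S)"
  have "S \<noteq> {}" and "m \<ge> 2" using assms(2) by (auto simp: m_def)
  have row_gt: "(m - 1) * d < (\<Sum>z\<in>S. (norm (x - z))\<^sup>2)" if "x \<in> S" for x
  proof -
    have card_rest: "card (S - {x}) = card S - 1" and "card S \<ge> 1"
      using assms(2) \<open>x \<in> S\<close> by auto
    then have "S - {x} \<noteq> {}" using assms(2) by fastforce
    have "(m - 1) * d = (\<Sum>z\<in>S - {x}. d)"
      using card_rest \<open>card S \<ge> 1\<close> by (simp add: m_def)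
    also have "\<dots> < (\<Sum>z\<in>S - {x}. (norm (x - z))\<^sup>2)"
      using assms(1) \<open>S - {x} \<noteq> {}\<close> \<open>x \<in> S\<close> sep by (intro sum_strict_mono) auto
    also have "\<dots> = (\<Sum>z\<in>S. (norm (x - z))\<^sup>2)"
      using assms(1) \<open>x \<in> S\<close> by (simp add: sum.remove)
    finally show ?thesis .
  qed
  have "m * ((m - 1) * d) < (\<Sum>x\<in>S. \<Sum>z\<in>S. (norm (x - z))\<^sup>2)"
    using sum_strict_mono[OF assms(1) \<open>S \<noteq> {}\<close> row_gt] by (simp add: m_def)
  then have "m * ((m - 1) * d) / (2 * m\<^sup>2) < avg_rad2 S"
    using \<open>m \<ge> 2\<close> unfolding avg_rad2_eq_sum_sum_norm_diff_sq[OF assms(1) \<open>S \<noteq> {}\<close>] m_def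
    by (intro divide_strict_right_mono) auto
  moreover have "m * ((m - 1) * d) / (2 * m\<^sup>2) = (m - 1) * d / (2 * m)"
    using \<open>m \<ge> 2\<close> by (simp add: power2_eq_square)
  ultimately show ?thesis by (simp add: m_def)
qed

lemma sphere_packing_sq_dist_gt:
  fixes C :: "'a::euclidean_space set"
  assumes "sphere_packing P N C" and "N \<ge> 0"
    and "x \<in> C" and "z \<in> C" and "x \<noteq> z"
  shows "4 * (real DIM('a) * N) < (norm (x - z))\<^sup>2"
proof -
  define r where "r = sqrt (real DIM('a) * N)"
  have "2 * r < dist x z"
  proof (rule ccontr)
    assume "\<not> 2 * r < dist x z"
    then have "x \<in> cball (midpoint x z) r" and "z \<in> cball (midpoint x z) r"
      by (simp_all add: dist_midpoint dist_commute)
    then show False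
      using assms(1,3-5) unfolding sphere_packing_def r_def by blast
  qed
  moreover have "r \<ge> 0" using assms(2) by (simp add: r_def)
  ultimately have "(2 * r)\<^sup>2 < (norm (x - z))\<^sup>2"
    by (intro power_strict_mono) (auto simp: dist_norm)
  then show ?thesis
    using assms(2) by (simp add: r_def power_mult_distrib)
qed

theorem mainTheorem10:
  fixes C :: "'a::euclidean_space set" and P N N' :: real and L :: nat
  assumes "P > 0" and "N > 0"
    and "sphere_packing P N C"
    and "L \<ge> 2"
    and "0 \<le> N'" and "N' < 2 * (real L - 1) * N / real L"
  shows "avg_radius_multiple_packing P N' L C"
  unfolding avg_radius_multiple_packing_def
proof (intro conjI allI impI)
  show "C \<subseteq> cball 0 (sqrt (real DIM('a) * P))"
    using assms(3) unfolding sphere_packing_def by blast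
next
  fix S assume S: "S \<subseteq> C \<and> finite S \<and> card S = L + 1"
  have "2 * (real L - 1) * N / real L \<le> 2 * real L * N / (real L + 1)"
    using assms(2,4) by (simp add: field_simps)
  then have "real DIM('a) * N' \<le> real DIM('a) * (2 * real L * N / (real L + 1))"
    using assms(6) by (intro mult_left_mono) auto
  also have "\<dots> = (real (card S) - 1) * (4 * (real DIM('a) * N)) / (2 * real (card S))"
    using S by (simp add: field_simps)
  also have "\<dots> < avg_rad2 S"
    using S assms(2,4) sphere_packing_sq_dist_gt[OF assms(3)]
    by (intro avg_rad2_gt_of_pairwise_sq_dist_gt) auto
  finally show "real DIM('a) * N' < avg_rad2 S" .
qed

end
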